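(* Let $p$ be a prime, $e\ge1$, and $G$ a finite abelian group of order $p^e$. Let $\psi^p\colon\mathbf{Z}[G]\to\mathbf{Z}[G]$ be the ring homomorphism with $\psi^p(g)=g^p$, and let $h(t)=\frac{1}{1-t}\left(p-\frac{1-t^p}{1-t}\right)$, a polynomial of degree $p-2$. Then $$\psi^p(b_1)=b_1+\sum_{\tau\neq1,\ \psi\tau=1}h(y_\tau)\,b_\tau,$$ where the sum runs over one representative $\tau$ of each equivalence class of nontrivial representations with $\psi\tau=1$.
   Context: A representation is a group homomorphism $\tau\colon G\to\mathbf{C}^*$; two representations are equivalent if they have the same kernel. $\psi\tau$ is the representation $x\mapsto\tau(x^p)$, and $1$ denotes the trivial representation. Write $\omega=\exp(2\pi i/p)$. For $\tau$ nontrivial, $b_\tau=\sum_{x\in G,\ \tau(x)=1}x-\sum_{\xi\in G,\ \tau(\xi)=\omega}\xi$ and $y_\tau\in G$ is a fixed element with $\tau(y_\tau)=\omega$; $b_1=\sum_{x\in G}x$. *)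

theory Defs
  imports Complex_Main "HOL-Algebra.Group" "HOL-Computational_Algebra.Polynomial"
begin

(* Elements of the integral group ring Z[G] of a finite group G are represented as
   functions 'a => int (coefficient of each group element), vanishing off carrier G. *)

definition gr_basis :: "('a, 'b) monoid_scheme \<Rightarrow> 'a \<Rightarrow> ('a \<Rightarrow> int)" where
  "gr_basis G g = (\<lambda>z. if z = g \<and> g \<in> carrier G then 1 else 0)"

definition gr_add :: "('a \<Rightarrow> int) \<Rightarrow> ('a \<Rightarrow> int) \<Rightarrow> ('a \<Rightarrow> int)" where
  "gr_add f h = (\<lambda>z. f z + h z)"

definition gr_mult :: "('a, 'b) monoid_scheme \<Rightarrow> ('a \<Rightarrow> int) \<Rightarrow> ('a \<Rightarrow> int) \<Rightarrow> ('a \<Rightarrow> int)" where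
  "gr_mult G f h = (\<lambda>z. if z \<in> carrier G
      then (\<Sum>x\<in>carrier G. f x * h (z \<otimes>\<^bsub>G\<^esub> inv\<^bsub>G\<^esub> x)) else 0)"

definition gr_sum :: "('i \<Rightarrow> ('a \<Rightarrow> int)) \<Rightarrow> 'i set \<Rightarrow> ('a \<Rightarrow> int)" where
  "gr_sum F I = (\<lambda>z. \<Sum>i\<in>I. F i z)"

definition psi_gr :: "('a, 'b) monoid_scheme \<Rightarrow> nat \<Rightarrow> ('a \<Rightarrow> int) \<Rightarrow> ('a \<Rightarrow> int)" where
  "psi_gr G p f = (\<lambda>z. \<Sum>x\<in>carrier G. if x [^]\<^bsub>G\<^esub> p = z then f x else 0)"

definition gr_poly_eval :: "('a, 'b) monoid_scheme \<Rightarrow> int poly \<Rightarrow> 'a \<Rightarrow> ('a \<Rightarrow> int)" where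
  "gr_poly_eval G q y =
     (\<lambda>z. \<Sum>i\<le>degree q. coeff q i * gr_basis G (y [^]\<^bsub>G\<^esub> i) z)"

(* h(t) = (1/(1-t)) (p - (1-t^p)/(1-t)), computed by exact division in Z[t] *)
definition h_poly :: "nat \<Rightarrow> int poly" where
  "h_poly p = ([:int p:] - ([:1:] - monom 1 p) div [:1, -1:]) div [:1, -1:]"

definition is_rep :: "('a, 'b) monoid_scheme \<Rightarrow> ('a \<Rightarrow> complex) \<Rightarrow> bool" where
  "is_rep G \<tau> \<longleftrightarrow> (\<forall>x\<in>carrier G. \<tau> x \<noteq> 0) \<and>
     (\<forall>x\<in>carrier G. \<forall>y\<in>carrier G. \<tau> (x \<otimes>\<^bsub>G\<^esub> y) = \<tau> x * \<tau> y)"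

definition rep_trivial :: "('a, 'b) monoid_scheme \<Rightarrow> ('a \<Rightarrow> complex) \<Rightarrow> bool" where
  "rep_trivial G \<tau> \<longleftrightarrow> (\<forall>x\<in>carrier G. \<tau> x = 1)"

definition psi_rep :: "('a, 'b) monoid_scheme \<Rightarrow> nat \<Rightarrow> ('a \<Rightarrow> complex) \<Rightarrow> ('a \<Rightarrow> complex)" where
  "psi_rep G p \<tau> = (\<lambda>x. \<tau> (x [^]\<^bsub>G\<^esub> p))"

definition rep_kernel :: "('a, 'b) monoid_scheme \<Rightarrow> ('a \<Rightarrow> complex) \<Rightarrow> 'a set" where
  "rep_kernel G \<tau> = {x \<in> carrier G. \<tau> x = 1}"

definition rep_equiv :: "('a, 'b) monoid_scheme \<Rightarrow> ('a \<Rightarrow> complex) \<Rightarrow> ('a \<Rightarrow> complex) \<Rightarrow> bool" where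
  "rep_equiv G \<sigma> \<tau> \<longleftrightarrow> rep_kernel G \<sigma> = rep_kernel G \<tau>"

definition omega :: "nat \<Rightarrow> complex" where
  "omega p = exp (2 * of_real pi * \<i> / of_nat p)"

definition b_one :: "('a, 'b) monoid_scheme \<Rightarrow> ('a \<Rightarrow> int)" where
  "b_one G = (\<lambda>z. if z \<in> carrier G then 1 else 0)"

definition b_rep :: "('a, 'b) monoid_scheme \<Rightarrow> nat \<Rightarrow> ('a \<Rightarrow> complex) \<Rightarrow> ('a \<Rightarrow> int)" where
  "b_rep G p \<tau> = (\<lambda>z. if z \<in> carrier G
      then (if \<tau> z = 1 then 1 else 0) - (if \<tau> z = omega p then 1 else 0) else 0)"

end

theory Submission
  imports Defs "HOL-Analysis.Complex_Transcendental" "HOL-Number_Theory.Cong"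
begin

text \<open>Evaluated at \<open>z\<close>, the left-hand side counts the \<open>p\<close>-th roots of \<open>z\<close> in \<open>G\<close>. The
  characters of \<open>G\<close> with values in the \<open>p\<close>-th roots of unity separate every point outside the
  subgroup of \<open>p\<close>-th powers from it, so by orthogonality this count is the sum of \<open>\<kappa> z\<close> over
  these characters. Every nontrivial such character is \<open>\<tau>^k\<close> for exactly one representative \<open>\<tau>\<close>
  and one \<open>1 \<le> k < p\<close>, so the count equals \<open>1 + \<Sum>\<tau>. \<Sum>k. \<tau>(z)^k = 1 + \<Sum>\<tau>. (p [\<tau> z = 1] - 1)\<close>.
  On the other side \<open>(1 - t) h(t) = p - (1 + t + \<dots> + t^(p-1))\<close>, so when \<open>\<tau> z = \<omega>^j\<close> the
  coefficient of \<open>z\<close> in \<open>h(y\<tau>) b\<tau>\<close> telescopes to \<open>p [j = 0] - 1\<close>.\<close>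

lemma omega_power: "omega p ^ j = exp (2 * of_real pi * \<i> * of_nat j / of_nat p)"
  unfolding omega_def exp_of_nat_mult[symmetric] by (simp add: mult_ac)

lemma omega_nonzero: "omega p \<noteq> 0"
  by (simp add: omega_def)

lemma omega_power_eq_iff: "1 \<le> p \<Longrightarrow> omega p ^ j = omega p ^ k \<longleftrightarrow> j mod p = k mod p"
  unfolding omega_power by (rule complex_root_unity_eq)

lemma omega_power_eq_1_iff: "1 \<le> p \<Longrightarrow> omega p ^ j = 1 \<longleftrightarrow> p dvd j"
  unfolding omega_power by (rule complex_root_unity_eq_1)

lemma root_unity_eq_omega_power:
  assumes "1 \<le> p" "z ^ p = 1"
  obtains j where "j < p" "z = omega p ^ j"
  using assms complex_roots_unity[of p] by (auto simp: omega_power)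

lemma sum_powers_root_unity:
  assumes "1 \<le> p" "(z::complex) ^ p = 1"
  shows "(\<Sum>k=1..<p. z ^ k) = (if z = 1 then of_nat p - 1 else -1)"
proof -
  have split: "(\<Sum>k<p. z ^ k) = 1 + (\<Sum>k=1..<p. z ^ k)"
    using assms(1) by (simp add: lessThan_atLeast0 sum.atLeast_Suc_lessThan)
  show ?thesis
  proof (cases "z = 1")
    case True
    then show ?thesis using assms(1) by (simp add: of_nat_diff)
  next
    case False
    then have "(\<Sum>k<p. z ^ k) = 0" using assms by (simp add: geometric_sum)
    then show ?thesis using split False by (simp add: eq_neg_iff_add_eq_0 add.commute)
  qed
qed

lemma prime_root_unity_power_eq_1_iff:
  assumes "prime p" "(\<zeta>::complex) ^ p = 1" "1 \<le> k" "k < p"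
  shows "\<zeta> ^ k = 1 \<longleftrightarrow> \<zeta> = 1"
proof -
  have p: "1 \<le> p" using assms(3,4) by simp
  obtain j where j: "j < p" "\<zeta> = omega p ^ j"
    using root_unity_eq_omega_power[OF p assms(2)] .
  have "\<zeta> ^ k = 1 \<longleftrightarrow> p dvd j * k"
    using j omega_power_eq_1_iff[OF p, of "j * k"] by (simp add: power_mult)
  also have "\<dots> \<longleftrightarrow> p dvd j"
    using assms(1,3,4) by (auto simp: prime_dvd_mult_iff dest: dvd_imp_le)
  also have "\<dots> \<longleftrightarrow> \<zeta> = 1"
    using j omega_power_eq_1_iff[OF p, of j] by simp
  finally show ?thesis .
qed

lemma one_minus_monom_eq: "([:1:] - monom 1 n :: int poly) = [:1, -1:] * (\<Sum>k<n. monom 1 k)"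
proof (induction n)
  case (Suc n)
  have "[:1, -1:] * (\<Sum>k<Suc n. monom (1::int) k) = [:1:] - monom 1 n + [:1, -1:] * monom 1 n"
    using Suc by (simp add: algebra_simps)
  also have "[:1, -1:] * monom (1::int) n = monom 1 n - monom 1 (Suc n)"
    by (simp add: monom_Suc algebra_simps monom_altdef)
  finally show ?case by simp
qed simp

lemma h_poly_mult: "[:1, -1:] * h_poly p = [:int p:] - (\<Sum>k<p. monom 1 k)"
proof -
  define S where "S = (\<Sum>k<p. monom (1::int) k)"
  have "([:1:] - monom 1 p) div [:1, -1:] = S"
    unfolding one_minus_monom_eq S_def by (rule nonzero_mult_div_cancel_left) simp
  then have h: "h_poly p = ([:int p:] - S) div [:1, -1:]"
    by (simp add: h_poly_def)
  have "poly S 1 = int p"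
    unfolding S_def by (simp add: poly_sum poly_monom)
  then have "poly ([:int p:] - S) 1 = 0"
    by simp
  then have "[:-1, 1:] dvd [:int p:] - S"
    using poly_eq_0_iff_dvd[of "[:int p:] - S" 1] by simp
  then have "[:1, -1:] dvd [:int p:] - S"
    using minus_dvd_iff[of "[:-1, 1::int:]"] by simp
  then show ?thesis
    unfolding h S_def by (rule dvd_mult_div_cancel)
qed

lemma coeff_one_minus_X_mult:
  "coeff ([:1, -1:] * (q :: 'a::comm_ring_1 poly)) j = coeff q j - (if j = 0 then 0 else coeff q (j - 1))"
  by (cases j) (auto simp: coeff_pCons)

lemma coeff_h_poly_diff:
  assumes "j < p"
  shows "coeff (h_poly p) j - (if j = 0 then 0 else coeff (h_poly p) (j - 1))
           = (if j = 0 then int p else 0) - 1"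
proof -
  have "coeff (h_poly p) j - (if j = 0 then 0 else coeff (h_poly p) (j - 1))
          = coeff ([:int p:] - (\<Sum>k<p. monom 1 k)) j"
    by (metis coeff_one_minus_X_mult h_poly_mult)
  then show ?thesis
    using assms by (simp add: coeff_sum coeff_pCons split: nat.splits)
qed

lemma degree_h_poly:
  assumes "2 \<le> p"
  shows "degree (h_poly p) + 2 \<le> p"
proof -
  define S where "S = (\<Sum>k<p. monom (1::int) k)"
  have coeff_S: "coeff S j = (if j < p then 1 else 0)" for j
    unfolding S_def by (simp add: coeff_sum)
  have eq: "[:1, -1:] * h_poly p = [:int p:] - S"
    unfolding S_def by (rule h_poly_mult)
  have "coeff ([:int p:] - S) 0 \<noteq> 0"
    using assms coeff_S[of 0] by simp
  then have "h_poly p \<noteq> 0"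
    using eq by auto
  then have "degree ([:1, -1:] * h_poly p) = degree (h_poly p) + 1"
    by (subst degree_mult_eq) auto
  moreover have "degree ([:int p:] - S) \<le> p - 1"
    using assms by (intro degree_le) (auto simp: coeff_S coeff_pCons split: nat.splits)
  ultimately show ?thesis
    using eq assms by simp
qed

lemma sum_coeff_times_delta_diff:
  fixes q :: "'a::comm_ring_1 poly"
  shows "(\<Sum>i\<le>degree q. coeff q i * ((if i = j then 1 else 0) - (if i + 1 = j then 1 else 0)))
     = coeff q j - (if j = 0 then 0 else coeff q (j - 1))"
proof -
  have delta: "(\<Sum>i\<le>degree q. if i = k then coeff q i else 0) = coeff q k" for k
    by (simp add: coeff_eq_0 not_le)
  have "(\<Sum>i\<le>degree q. coeff q i * ((if i = j then 1 else 0) - (if i + 1 = j then 1 else 0)))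
      = (\<Sum>i\<le>degree q. (if i = j then coeff q i else 0) - (if i + 1 = j then coeff q i else 0))"
    by (intro sum.cong) auto
  also have "\<dots> = coeff q j - (\<Sum>i\<le>degree q. if i + 1 = j then coeff q i else 0)"
    by (simp only: sum_subtractf delta)
  also have "(\<Sum>i\<le>degree q. if i + 1 = j then coeff q i else 0) = (if j = 0 then 0 else coeff q (j - 1))"
    using delta[of "j - 1"] by (cases j) (auto intro: sum.cong)
  finally show ?thesis .
qed

context group
begin

lemma is_rep_one:
  assumes "is_rep G f"
  shows "f \<one> = 1"
proof -
  have "f \<one> = f \<one> * f \<one>" and "f \<one> \<noteq> 0"
    using assms unfolding is_rep_def by (metis one_closed l_one)+
  then show ?thesis by simp
qed

lemma is_rep_pow:
  assumes "is_rep G f" "x \<in> carrier G"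
  shows "f (x [^] (n::nat)) = f x ^ n"
proof (induction n)
  case 0
  then show ?case using is_rep_one[OF assms(1)] by simp
next
  case (Suc n)
  then show ?case using assms unfolding is_rep_def by (simp add: mult.commute)
qed

lemma is_rep_inv:
  assumes "is_rep G f" "x \<in> carrier G"
  shows "f (inv x) = inverse (f x)"
proof -
  have "f x * f (inv x) = f (x \<otimes> inv x)"
    using assms unfolding is_rep_def by (metis inv_closed)
  also have "\<dots> = 1"
    using is_rep_one[OF assms(1)] assms(2) by simp
  finally show ?thesis by (simp add: inverse_unique)
qed

lemma is_rep_mult_inv_pow:
  assumes "is_rep G f" "x \<in> carrier G" "y \<in> carrier G"
  shows "f (x \<otimes> inv (y [^] (n::nat))) = f x * inverse (f y ^ n)"
  using assms is_rep_inv[OF assms(1)] is_rep_pow[OF assms(1)] unfolding is_rep_def by simp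

lemma gr_mult_poly_eval:
  assumes "finite (carrier G)" "y \<in> carrier G" "z \<in> carrier G"
  shows "gr_mult G (gr_poly_eval G q y) b z = (\<Sum>i\<le>degree q. coeff q i * b (z \<otimes> inv (y [^] i)))"
proof -
  have "gr_mult G (gr_poly_eval G q y) b z
      = (\<Sum>i\<le>degree q. \<Sum>x\<in>carrier G. coeff q i * (gr_basis G (y [^] i) x * b (z \<otimes> inv x)))"
    using assms(3) unfolding gr_mult_def gr_poly_eval_def
    by (simp add: sum_distrib_right sum.swap[of _ "carrier G"] mult.assoc)
  also have "\<dots> = (\<Sum>i\<le>degree q. coeff q i * b (z \<otimes> inv (y [^] i)))"
  proof (intro sum.cong refl)
    fix i
    have "(\<Sum>x\<in>carrier G. coeff q i * (gr_basis G (y [^] i) x * b (z \<otimes> inv x)))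
        = (\<Sum>x\<in>carrier G. if x = y [^] i then coeff q i * b (z \<otimes> inv x) else 0)"
      using assms(2) by (intro sum.cong refl) (auto simp: gr_basis_def)
    then show "(\<Sum>x\<in>carrier G. coeff q i * (gr_basis G (y [^] i) x * b (z \<otimes> inv x)))
        = coeff q i * b (z \<otimes> inv (y [^] i))"
      using assms(1,2) by (simp add: sum.delta)
  qed
  finally show ?thesis .
qed

lemma gr_mult_h_poly_b_rep:
  assumes "finite (carrier G)" "2 \<le> p" "is_rep G \<tau>"
    and "y \<in> carrier G" "\<tau> y = omega p" and "z \<in> carrier G" "\<tau> z ^ p = 1"
  shows "gr_mult G (gr_poly_eval G (h_poly p) y) (b_rep G p \<tau>) z = (if \<tau> z = 1 then int p else 0) - 1"
proof -
  have p: "1 \<le> p" using assms(2) by simp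
  obtain j where j: "j < p" "\<tau> z = omega p ^ j"
    using root_unity_eq_omega_power[OF p assms(7)] .
  have b_rep_shift: "b_rep G p \<tau> (z \<otimes> inv (y [^] i)) = (if i = j then 1 else 0) - (if i + 1 = j then 1 else 0)"
    if "i \<le> degree (h_poly p)" for i
  proof -
    have "i + 1 < p" using that degree_h_poly[OF assms(2)] by simp
    have "\<tau> (z \<otimes> inv (y [^] i)) = omega p ^ k \<longleftrightarrow> j = i + k" if "i + k < p" for k
    proof -
      have "\<tau> (z \<otimes> inv (y [^] i)) = omega p ^ j * inverse (omega p ^ i)"
        using is_rep_mult_inv_pow[OF assms(3,6,4)] j assms(5) by simp
      then have "\<tau> (z \<otimes> inv (y [^] i)) = omega p ^ k \<longleftrightarrow> omega p ^ j = omega p ^ (i + k)"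
        using omega_nonzero by (auto simp: field_simps power_add)
      also have "\<dots> \<longleftrightarrow> j = i + k"
        using omega_power_eq_iff[OF p] j(1) that by simp
      finally show ?thesis .
    qed
    from this[of 0] this[of 1] \<open>i + 1 < p\<close> show ?thesis
      using assms(4,6) unfolding b_rep_def by auto
  qed
  have "gr_mult G (gr_poly_eval G (h_poly p) y) (b_rep G p \<tau>) z
      = (\<Sum>i\<le>degree (h_poly p). coeff (h_poly p) i * ((if i = j then 1 else 0) - (if i + 1 = j then 1 else 0)))"
    unfolding gr_mult_poly_eval[OF assms(1,4,6)] by (intro sum.cong) (simp_all add: b_rep_shift)
  also have "\<dots> = (if j = 0 then int p else 0) - 1"
    unfolding sum_coeff_times_delta_diff by (rule coeff_h_poly_diff[OF j(1)])
  also have "j = 0 \<longleftrightarrow> \<tau> z = 1"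
    using j omega_power_eq_1_iff[OF p, of j] by auto
  finally show ?thesis .
qed

lemma rep_eq_power_if_kernel_subset:
  assumes "is_rep G \<tau>" "is_rep G \<kappa>" "rep_kernel G \<tau> \<subseteq> rep_kernel G \<kappa>" "1 \<le> p"
    and "y \<in> carrier G" "\<tau> y = omega p" "\<kappa> y = omega p ^ k"
    and "x \<in> carrier G" "\<tau> x ^ p = 1"
  shows "\<kappa> x = \<tau> x ^ k"
proof -
  obtain j where j: "j < p" "\<tau> x = omega p ^ j"
    using root_unity_eq_omega_power[OF assms(4,9)] .
  have "\<tau> (x \<otimes> inv (y [^] j)) = 1"
    using is_rep_mult_inv_pow[OF assms(1,8,5)] j assms(6) omega_nonzero by simp
  moreover have "x \<otimes> inv (y [^] j) \<in> carrier G"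
    using assms(5,8) by simp
  ultimately have "x \<otimes> inv (y [^] j) \<in> rep_kernel G \<kappa>"
    using assms(3) unfolding rep_kernel_def by blast
  then have "\<kappa> x * inverse (\<kappa> y ^ j) = 1"
    using is_rep_mult_inv_pow[OF assms(2,8,5)] unfolding rep_kernel_def by simp
  then have "\<kappa> x = \<kappa> y ^ j"
    using assms(7) omega_nonzero by (simp add: field_simps)
  then show ?thesis
    using assms(7) j(2) by (simp add: power_mult[symmetric] mult.commute)
qed

lemma subgroup_nat_pow_closed:
  assumes "subgroup H G" "h \<in> H"
  shows "h [^] (n::nat) \<in> H"
  by (induction n) (simp_all add: assms subgroup.one_closed subgroup.m_closed)

lemma mem_subgroup_of_coprime_power:
  fixes p d :: nat
  assumes "prime p" "subgroup H G" "x \<in> carrier G" "x [^] p \<in> H" "x [^] d \<in> H" "\<not> p dvd d"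
  shows "x \<in> H"
proof -
  have "coprime d p"
    using assms(1,6) by (metis prime_imp_coprime coprime_commute)
  then obtain e where "[d * e = 1] (mod p)"
    using cong_solve_coprime_nat by auto
  then obtain k where "d * e = 1 + p * k"
    using prime_gt_1_nat[OF assms(1)] div_mult_mod_eq[of "d * e" p]
    by (metis cong_def mod_less add.commute mult.commute)
  then have "x [^] (d * e) = x \<otimes> (x [^] p) [^] k"
    using assms(3) nat_pow_mult[of x 1 "p * k"] by (simp add: nat_pow_pow)
  then have "x = (x [^] d) [^] e \<otimes> inv ((x [^] p) [^] k)"
    using assms(3) by (simp add: nat_pow_pow m_assoc)
  also have "\<dots> \<in> H"
    using assms(2,4,5) subgroup_nat_pow_closed
    by (simp add: subgroup.m_closed subgroup.m_inv_closed)
  finally show ?thesis .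
qed

end

locale exponent_p_characters = comm_group G for G (structure) +
  fixes p :: nat
  assumes prime_p: "prime p" and finite_carrier: "finite (carrier G)"
begin

lemma two_le_p: "2 \<le> p"
  using prime_p by (simp add: prime_ge_2_nat)

text \<open>Characters are normalised to \<open>1\<close> off the carrier so that there are only finitely many.\<close>

definition characters :: "('a \<Rightarrow> complex) set" where
  "characters = {\<kappa>. (\<forall>x\<in>carrier G. \<kappa> x ^ p = 1)
      \<and> (\<forall>x\<in>carrier G. \<forall>y\<in>carrier G. \<kappa> (x \<otimes> y) = \<kappa> x * \<kappa> y)
      \<and> (\<forall>x. x \<notin> carrier G \<longrightarrow> \<kappa> x = 1)}"

definition pth_powers :: "'a set" where
  "pth_powers = (\<lambda>x. x [^] p) ` carrier G"

lemma characters_nonzero: "\<kappa> \<in> characters \<Longrightarrow> \<kappa> x \<noteq> 0"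
  using two_le_p unfolding characters_def by (cases "x \<in> carrier G") (auto simp: power_0_left)

lemma characters_is_rep: "\<kappa> \<in> characters \<Longrightarrow> is_rep G \<kappa>"
  using characters_nonzero unfolding is_rep_def characters_def by auto

lemma const_one_in_characters: "(\<lambda>_. 1) \<in> characters"
  unfolding characters_def by auto

lemma characters_mult: "\<kappa> \<in> characters \<Longrightarrow> \<kappa>' \<in> characters \<Longrightarrow> (\<lambda>x. \<kappa> x * \<kappa>' x) \<in> characters"
  unfolding characters_def by (auto simp: power_mult_distrib)

lemma characters_inverse: "\<kappa> \<in> characters \<Longrightarrow> (\<lambda>x. inverse (\<kappa> x)) \<in> characters"
  unfolding characters_def by (auto simp: power_inverse)

lemma finite_characters: "finite characters"
proof -
  let ?R = "{\<zeta>::complex. \<zeta> ^ p = 1}"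
  have "characters \<subseteq> (\<lambda>f x. if x \<in> carrier G then f x else 1) ` (carrier G \<rightarrow>\<^sub>E ?R)"
  proof
    fix \<kappa> assume \<kappa>: "\<kappa> \<in> characters"
    then have "\<kappa> = (\<lambda>x. if x \<in> carrier G then restrict \<kappa> (carrier G) x else 1)"
      and "restrict \<kappa> (carrier G) \<in> carrier G \<rightarrow>\<^sub>E ?R"
      unfolding characters_def by auto
    then show "\<kappa> \<in> (\<lambda>f x. if x \<in> carrier G then f x else 1) ` (carrier G \<rightarrow>\<^sub>E ?R)"
      by blast
  qed
  moreover have "finite (carrier G \<rightarrow>\<^sub>E ?R)"
    using finite_carrier two_le_p by (intro finite_PiE finite_roots_unity) auto
  ultimately show ?thesis
    by (meson finite_imageI finite_subset)
qed

lemma character_nontrivial_witness: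
  assumes "\<kappa> \<in> characters" "\<kappa> \<noteq> (\<lambda>_. 1)"
  obtains w where "w \<in> carrier G" "\<kappa> w \<noteq> 1"
proof -
  have "\<kappa> x = 1" if "x \<notin> carrier G" for x
    using assms(1) that unfolding characters_def by blast
  with assms(2) have "\<exists>w\<in>carrier G. \<kappa> w \<noteq> 1"
    by fastforce
  with that show ?thesis by blast
qed

lemma sum_characters_eq_0:
  assumes "z \<in> carrier G" "\<kappa>\<^sub>0 \<in> characters" "\<kappa>\<^sub>0 z \<noteq> 1"
  shows "(\<Sum>\<kappa>\<in>characters. \<kappa> z) = 0"
proof -
  have bij: "bij_betw (\<lambda>\<kappa> x. \<kappa>\<^sub>0 x * \<kappa> x) characters characters"
    by (rule bij_betw_byWitness[where f' = "\<lambda>\<kappa> x. inverse (\<kappa>\<^sub>0 x) * \<kappa> x"])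
       (use assms(2) characters_nonzero characters_mult characters_inverse in auto)
  have "(\<Sum>\<kappa>\<in>characters. \<kappa>\<^sub>0 z * \<kappa> z) = (\<Sum>\<kappa>\<in>characters. \<kappa> z)"
    using sum.reindex_bij_betw[OF bij, of "\<lambda>\<kappa>. \<kappa> z"] by simp
  then have "\<kappa>\<^sub>0 z * (\<Sum>\<kappa>\<in>characters. \<kappa> z) = 1 * (\<Sum>\<kappa>\<in>characters. \<kappa> z)"
    by (simp add: sum_distrib_left)
  then show ?thesis
    using assms(3) by (metis mult_cancel_right)
qed

lemma sum_character_values_eq_0:
  assumes "\<kappa> \<in> characters" "\<kappa> \<noteq> (\<lambda>_. 1)"
  shows "(\<Sum>z\<in>carrier G. \<kappa> z) = 0"
proof -
  obtain w where w: "w \<in> carrier G" "\<kappa> w \<noteq> 1"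
    using character_nontrivial_witness[OF assms] .
  have "bij_betw (\<lambda>z. w \<otimes> z) (carrier G) (carrier G)"
    by (rule bij_betw_byWitness[where f' = "\<lambda>z. inv w \<otimes> z"])
       (use w in \<open>auto simp: m_assoc[symmetric]\<close>)
  then have "(\<Sum>z\<in>carrier G. \<kappa> (w \<otimes> z)) = (\<Sum>z\<in>carrier G. \<kappa> z)"
    using sum.reindex_bij_betw by blast
  moreover have "(\<Sum>z\<in>carrier G. \<kappa> (w \<otimes> z)) = \<kappa> w * (\<Sum>z\<in>carrier G. \<kappa> z)"
    using assms(1) w(1) unfolding characters_def by (simp add: sum_distrib_left)
  ultimately have "\<kappa> w * (\<Sum>z\<in>carrier G. \<kappa> z) = 1 * (\<Sum>z\<in>carrier G. \<kappa> z)"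
    by simp
  then show ?thesis
    using w(2) by (metis mult_cancel_right)
qed

lemma sum_sum_characters: "(\<Sum>z\<in>carrier G. \<Sum>\<kappa>\<in>characters. \<kappa> z) = of_nat (card (carrier G))"
proof -
  have "(\<Sum>z\<in>carrier G. \<Sum>\<kappa>\<in>characters. \<kappa> z) = (\<Sum>\<kappa>\<in>characters. \<Sum>z\<in>carrier G. \<kappa> z)"
    by (rule sum.swap)
  also have "\<dots> = (\<Sum>\<kappa>\<in>characters. if \<kappa> = (\<lambda>_. 1) then of_nat (card (carrier G)) else 0)"
    using sum_character_values_eq_0 by (intro sum.cong) auto
  also have "\<dots> = of_nat (card (carrier G))"
    using finite_characters const_one_in_characters by (simp add: sum.delta')
  finally show ?thesis .
qed

lemma subgroup_pth_powers: "subgroup pth_powers G"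
proof (rule subgroupI)
  show "pth_powers \<subseteq> carrier G"
    unfolding pth_powers_def by auto
  show "pth_powers \<noteq> {}"
    unfolding pth_powers_def by blast
  show "inv a \<in> pth_powers" if a: "a \<in> pth_powers" for a
  proof -
    obtain x where "x \<in> carrier G" "a = x [^] p"
      using a unfolding pth_powers_def by blast
    then have "inv a = inv x [^] p" "inv x \<in> carrier G"
      by (simp_all add: nat_pow_inv)
    then show ?thesis
      unfolding pth_powers_def by (rule image_eqI)
  qed
  show "a \<otimes> b \<in> pth_powers" if ab: "a \<in> pth_powers" "b \<in> pth_powers" for a b
  proof -
    obtain x y where "x \<in> carrier G" "y \<in> carrier G" "a = x [^] p" "b = y [^] p"
      using ab unfolding pth_powers_def by blast
    then have "a \<otimes> b = (x \<otimes> y) [^] p" "x \<otimes> y \<in> carrier G"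
      by (simp_all add: nat_pow_distrib)
    then show ?thesis
      unfolding pth_powers_def by (rule image_eqI)
  qed
qed

lemma character_pth_power:
  assumes "\<kappa> \<in> characters" "z \<in> pth_powers"
  shows "\<kappa> z = 1"
  using assms is_rep_pow[OF characters_is_rep[OF assms(1)]]
  unfolding pth_powers_def characters_def by auto

lemma pth_power_mem: "pth_powers \<subseteq> H \<Longrightarrow> x \<in> carrier G \<Longrightarrow> x [^] p \<in> H"
  unfolding pth_powers_def by auto

definition adjoin :: "'a \<Rightarrow> 'a set \<Rightarrow> 'a set" where
  "adjoin x H = {x [^] (n::nat) \<otimes> h | n h. h \<in> H}"

lemma mem_adjoinI: "h \<in> H \<Longrightarrow> x [^] (n::nat) \<otimes> h \<in> adjoin x H"
  unfolding adjoin_def by blast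

lemma subset_adjoin:
  assumes "subgroup H G"
  shows "H \<subseteq> adjoin x H"
proof
  fix h assume "h \<in> H"
  moreover have "h = x [^] (0::nat) \<otimes> h"
    using \<open>h \<in> H\<close> subgroup.subset[OF assms] by auto
  ultimately show "h \<in> adjoin x H"
    using mem_adjoinI by metis
qed

lemma mem_adjoin_self:
  assumes "subgroup H G" "x \<in> carrier G"
  shows "x \<in> adjoin x H"
proof -
  have "x = x [^] (1::nat) \<otimes> \<one>"
    using assms(2) by simp
  then show ?thesis
    using mem_adjoinI[OF subgroup.one_closed[OF assms(1)]] by metis
qed

lemma subgroup_adjoin:
  assumes H: "subgroup H G" and x: "x \<in> carrier G" "x [^] p \<in> H"
  shows "subgroup (adjoin x H) G"
proof (rule subgroupI)
  have Hc: "H \<subseteq> carrier G"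
    using H by (rule subgroup.subset)
  show "adjoin x H \<subseteq> carrier G"
    unfolding adjoin_def using Hc x by auto
  show "adjoin x H \<noteq> {}"
    using subset_adjoin[OF H] subgroup.one_closed[OF H] by blast
  show "inv a \<in> adjoin x H" if a: "a \<in> adjoin x H" for a
  proof -
    obtain n :: nat and h where nh: "a = x [^] n \<otimes> h" "h \<in> H"
      using a unfolding adjoin_def by blast
    have h: "h \<in> carrier G"
      using nh Hc by auto
    have "n * (p - 1) + n = p * n"
      using two_le_p by (cases p) auto
    then have pow: "x [^] (n * (p - 1)) \<otimes> x [^] n = (x [^] p) [^] n"
      using x by (simp add: nat_pow_mult nat_pow_pow)
    have "inv (x [^] n) = x [^] (n * (p - 1)) \<otimes> inv ((x [^] p) [^] n)"
      unfolding pow[symmetric] using x by (simp add: inv_mult m_assoc[symmetric])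
    then have "inv a = x [^] (n * (p - 1)) \<otimes> (inv ((x [^] p) [^] n) \<otimes> inv h)"
      using nh h x by (simp add: inv_mult m_assoc)
    moreover have "inv ((x [^] p) [^] n) \<otimes> inv h \<in> H"
      using H x nh subgroup_nat_pow_closed by (simp add: subgroup.m_closed subgroup.m_inv_closed)
    ultimately show ?thesis
      by (simp add: mem_adjoinI)
  qed
  show "a \<otimes> b \<in> adjoin x H" if ab: "a \<in> adjoin x H" "b \<in> adjoin x H" for a b
  proof -
    obtain n m :: nat and h k where "a = x [^] n \<otimes> h" "h \<in> H" "b = x [^] m \<otimes> k" "k \<in> H"
      using ab unfolding adjoin_def by blast
    moreover have "h \<in> carrier G" "k \<in> carrier G"
      using calculation Hc by auto
    ultimately have "a \<otimes> b = x [^] (n + m) \<otimes> (h \<otimes> k)" "h \<otimes> k \<in> H"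
      using x H by (simp_all add: nat_pow_mult[symmetric] m_ac subgroup.m_closed)
    then show ?thesis
      by (simp add: mem_adjoinI)
  qed
qed

lemma adjoin_exponent_cong:
  assumes H: "subgroup H G" and z: "z \<in> carrier G" "z \<notin> H" "z [^] p \<in> H"
    and eq: "h \<in> H" "h' \<in> H" "z [^] n \<otimes> h = z [^] m \<otimes> h'"
  shows "n mod p = m mod p"
proof -
  have dvd: "p dvd m - n"
    if "n \<le> m" "h \<in> H" "h' \<in> H" "z [^] n \<otimes> h = z [^] m \<otimes> h'" for n m h h'
  proof -
    have hc: "h \<in> carrier G" "h' \<in> carrier G"
      using that(2,3) subgroup.subset[OF H] by auto
    have "z [^] m = z [^] n \<otimes> z [^] (m - n)"
      using z that(1) by (simp add: nat_pow_mult)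
    then have "h = z [^] (m - n) \<otimes> h'"
      using that(4) z hc by (simp add: m_assoc)
    then have "z [^] (m - n) = h \<otimes> inv h'"
      using z hc by (simp add: m_assoc)
    also have "\<dots> \<in> H"
      using H that(2,3) by (simp add: subgroup.m_closed subgroup.m_inv_closed)
    finally show ?thesis
      using mem_subgroup_of_coprime_power[OF prime_p H z(1,3)] z(2) by blast
  qed
  show ?thesis
  proof (cases "n \<le> m")
    case True
    then show ?thesis using dvd[OF True eq] by (metis mod_eq_dvd_iff_nat)
  next
    case False
    then have "m \<le> n" by simp
    then show ?thesis using dvd[of m n h' h] eq by (metis mod_eq_dvd_iff_nat)
  qed
qed

definition adjoin_character :: "'a \<Rightarrow> 'a set \<Rightarrow> 'a \<Rightarrow> complex" where
  "adjoin_character z H w =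
     (if w \<in> carrier G then omega p ^ (SOME n::nat. \<exists>h\<in>H. w = z [^] n \<otimes> h) else 1)"

lemma adjoin_character_eq:
  assumes H: "subgroup H G" and z: "z \<in> carrier G" "z \<notin> H" "z [^] p \<in> H" and h: "h \<in> H"
  shows "adjoin_character z H (z [^] n \<otimes> h) = omega p ^ n"
proof -
  let ?m = "SOME m::nat. \<exists>h'\<in>H. z [^] n \<otimes> h = z [^] m \<otimes> h'"
  have "\<exists>h'\<in>H. z [^] n \<otimes> h = z [^] ?m \<otimes> h'"
    by (rule someI_ex) (use h in blast)
  then have "n mod p = ?m mod p"
    using adjoin_exponent_cong[OF H z h] by blast
  moreover have "z [^] n \<otimes> h \<in> carrier G"
    using z(1) h subgroup.subset[OF H] by blast
  ultimately show ?thesis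
    unfolding adjoin_character_def using omega_power_eq_iff two_le_p by simp
qed

lemma adjoin_character_in_characters:
  assumes H: "subgroup H G" and z: "z \<in> carrier G" "z \<notin> H" "z [^] p \<in> H"
    and cover: "carrier G = adjoin z H"
  shows "adjoin_character z H \<in> characters"
  unfolding characters_def
proof (intro CollectI conjI ballI allI impI)
  fix x assume "x \<in> carrier G"
  then show "adjoin_character z H x ^ p = 1"
    using omega_power_eq_1_iff two_le_p unfolding adjoin_character_def by (simp add: power_mult[symmetric])
next
  fix x w assume "x \<in> carrier G" "w \<in> carrier G"
  then obtain n m :: nat and h k where x: "x = z [^] n \<otimes> h" "h \<in> H" and w: "w = z [^] m \<otimes> k" "k \<in> H"
    using cover unfolding adjoin_def by blast
  moreover have "h \<in> carrier G" "k \<in> carrier G"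
    using x w subgroup.subset[OF H] by auto
  ultimately have "x \<otimes> w = z [^] (n + m) \<otimes> (h \<otimes> k)"
    using z by (simp add: nat_pow_mult[symmetric] m_ac)
  then show "adjoin_character z H (x \<otimes> w) = adjoin_character z H x * adjoin_character z H w"
    using x w H by (simp add: adjoin_character_eq[OF H z] subgroup.m_closed power_add)
next
  fix x assume "x \<notin> carrier G"
  then show "adjoin_character z H x = 1"
    unfolding adjoin_character_def by simp
qed

lemma adjoin_character_nontrivial:
  assumes H: "subgroup H G" and z: "z \<in> carrier G" "z \<notin> H" "z [^] p \<in> H"
  shows "adjoin_character z H z \<noteq> 1"
proof -
  have "adjoin_character z H z = adjoin_character z H (z [^] (1::nat) \<otimes> \<one>)"
    using z by simp
  also have "\<dots> = omega p ^ (1::nat)"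
    by (rule adjoin_character_eq[OF H z subgroup.one_closed[OF H]])
  finally show ?thesis
    using omega_power_eq_1_iff[of p 1] two_le_p by auto
qed

lemma adjoin_exchange:
  assumes H: "subgroup H G" "pth_powers \<subseteq> H"
    and x: "x \<in> carrier G" and z: "z \<in> carrier G" "z \<notin> H" "z \<in> adjoin x H"
  shows "x \<in> adjoin z H"
proof -
  obtain n :: nat and h where zn: "z = x [^] n \<otimes> h" "h \<in> H"
    using z(3) unfolding adjoin_def by blast
  have h: "h \<in> carrier G"
    using zn(2) subgroup.subset[OF H(1)] by blast
  have "\<not> p dvd n"
  proof
    assume "p dvd n"
    then obtain k where "n = p * k"
      by (rule dvdE)
    then have "x [^] n \<in> H"
      using subgroup_nat_pow_closed[OF H(1) pth_power_mem[OF H(2) x]] x by (simp add: nat_pow_pow)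
    then show False
      using zn H(1) z(2) by (simp add: subgroup.m_closed)
  qed
  moreover have "x [^] n \<in> adjoin z H"
  proof -
    have "x [^] n = z [^] (1::nat) \<otimes> inv h"
      using zn x h by (simp add: m_assoc)
    then show ?thesis
      using mem_adjoinI subgroup.m_inv_closed[OF H(1) zn(2)] by metis
  qed
  moreover have "x [^] p \<in> adjoin z H"
    using pth_power_mem[OF H(2) x] subset_adjoin[OF H(1)] by blast
  moreover have "subgroup (adjoin z H) G"
    using subgroup_adjoin[OF H(1) z(1) pth_power_mem[OF H(2) z(1)]] .
  ultimately show ?thesis
    using mem_subgroup_of_coprime_power[OF prime_p _ x] by blast
qed

text \<open>Choose \<open>H\<close> maximal among the subgroups containing the \<open>p\<close>-th powers but not \<open>z\<close>;
  maximality forces \<open>G = adjoin z H\<close>, on which \<open>z\<^sup>n h \<mapsto> \<omega>\<^sup>n\<close> is a character.\<close>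

lemma exists_character_separating:
  assumes z: "z \<in> carrier G" "z \<notin> pth_powers"
  obtains \<kappa> where "\<kappa> \<in> characters" "\<kappa> z \<noteq> 1"
proof -
  let ?S = "{H. subgroup H G \<and> pth_powers \<subseteq> H \<and> z \<notin> H}"
  have "?S \<subseteq> Pow (carrier G)"
    by (auto dest: subgroup.subset)
  then have "finite ?S"
    using finite_carrier by (rule finite_subset[OF _ finite_Pow_iff[THEN iffD2]])
  moreover have "?S \<noteq> {}"
    using subgroup_pth_powers z(2) by blast
  ultimately have "\<exists>H\<in>?S. \<forall>K\<in>?S. H \<subseteq> K \<longrightarrow> H = K"
    by (rule finite_has_maximal)
  then obtain H where H_in_S: "H \<in> ?S" and maximal: "\<forall>K\<in>?S. H \<subseteq> K \<longrightarrow> H = K"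
    by (rule bexE)
  from H_in_S have H: "subgroup H G" "pth_powers \<subseteq> H" "z \<notin> H"
    by simp_all
  have "x \<in> adjoin z H" if x: "x \<in> carrier G" for x
  proof (cases "x \<in> H")
    case True
    then show ?thesis using subset_adjoin[OF H(1)] by blast
  next
    case False
    have "adjoin x H \<notin> ?S"
    proof
      assume "adjoin x H \<in> ?S"
      then have "H = adjoin x H"
        using maximal subset_adjoin[OF H(1)] by blast
      then show False
        using False mem_adjoin_self[OF H(1) x] by blast
    qed
    moreover have "pth_powers \<subseteq> adjoin x H"
      using H(2) subset_adjoin[OF H(1), of x] by (rule order_trans)
    ultimately have "z \<in> adjoin x H"
      using subgroup_adjoin[OF H(1) x pth_power_mem[OF H(2) x]] by blast
    then show ?thesis
      using adjoin_exchange[OF H(1,2) x z(1) H(3)] by blast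
  qed
  moreover have "adjoin z H \<subseteq> carrier G"
    using subgroup.subset[OF subgroup_adjoin[OF H(1) z(1) pth_power_mem[OF H(2) z(1)]]] .
  ultimately have "carrier G = adjoin z H"
    by blast
  then show ?thesis
    using that adjoin_character_in_characters adjoin_character_nontrivial
      H(1,3) z(1) pth_power_mem[OF H(2) z(1)] by blast
qed

lemma sum_characters:
  assumes "z \<in> carrier G"
  shows "(\<Sum>\<kappa>\<in>characters. \<kappa> z) = (if z \<in> pth_powers then of_nat (card characters) else 0)"
proof (cases "z \<in> pth_powers")
  case True
  then have "(\<Sum>\<kappa>\<in>characters. \<kappa> z) = (\<Sum>\<kappa>\<in>characters. 1)"
    using character_pth_power by (intro sum.cong) auto
  then show ?thesis
    using True by simp
next
  case False
  then obtain \<kappa> where "\<kappa> \<in> characters" "\<kappa> z \<noteq> 1"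
    using exists_character_separating[OF assms] by blast
  then show ?thesis
    using sum_characters_eq_0[OF assms] False by simp
qed

lemma card_pth_roots_eq:
  assumes "z \<in> pth_powers"
  shows "card {x \<in> carrier G. x [^] p = z} = card {x \<in> carrier G. x [^] p = \<one>}"
proof -
  obtain w where w: "w \<in> carrier G" "z = w [^] p"
    using assms unfolding pth_powers_def by blast
  have "bij_betw (\<lambda>x. w \<otimes> x) {x \<in> carrier G. x [^] p = \<one>} {x \<in> carrier G. x [^] p = z}"
  proof (rule bij_betw_byWitness[where f' = "\<lambda>x. inv w \<otimes> x"])
    show "(\<lambda>x. w \<otimes> x) ` {x \<in> carrier G. x [^] p = \<one>} \<subseteq> {x \<in> carrier G. x [^] p = z}"
      using w by (auto simp: nat_pow_distrib)
    show "(\<lambda>x. inv w \<otimes> x) ` {x \<in> carrier G. x [^] p = z} \<subseteq> {x \<in> carrier G. x [^] p = \<one>}"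
      using w by (auto simp: nat_pow_distrib nat_pow_inv)
  qed (use w in \<open>auto simp: m_assoc[symmetric]\<close>)
  then show ?thesis
    by (simp add: bij_betw_same_card)
qed

lemma card_pth_roots:
  assumes z: "z \<in> carrier G"
  shows "of_nat (card {x \<in> carrier G. x [^] p = z}) = (\<Sum>\<kappa>\<in>characters. \<kappa> z)"
proof -
  define A where "A z = card {x \<in> carrier G. x [^] p = z}" for z
  have A_pth_power: "A z = A \<one>" if "z \<in> pth_powers" for z
    using card_pth_roots_eq[OF that] unfolding A_def .
  have A_other: "A z = 0" if "z \<notin> pth_powers" for z
  proof -
    have "{x \<in> carrier G. x [^] p = z} = {}"
      using that unfolding pth_powers_def by blast
    then show ?thesis
      unfolding A_def by (simp only: card.empty)
  qed
  have "carrier G = (\<Union>z\<in>pth_powers. {x \<in> carrier G. x [^] p = z})"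
    unfolding pth_powers_def by auto
  then have "card (carrier G) = (\<Sum>z\<in>pth_powers. A z)"
    unfolding A_def using finite_carrier subgroup.subset[OF subgroup_pth_powers]
    by (subst card_UN_disjoint[symmetric]) (auto intro: finite_subset)
  also have "\<dots> = card pth_powers * A \<one>"
    using A_pth_power by simp
  finally have card_by_fibres: "card (carrier G) = card pth_powers * A \<one>" .
  have "of_nat (card (carrier G)) = (\<Sum>z\<in>carrier G. if z \<in> pth_powers then of_nat (card characters) else 0::complex)"
    unfolding sum_sum_characters[symmetric] by (rule sum.cong[OF refl sum_characters])
  also have "\<dots> = of_nat (card pth_powers * card characters)"
    using subgroup.subset[OF subgroup_pth_powers] finite_carrier by (simp add: sum.If_cases Int_absorb1)
  finally have "card (carrier G) = card pth_powers * card characters"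
    by (simp only: of_nat_eq_iff)
  moreover have "card pth_powers > 0"
    unfolding pth_powers_def using finite_carrier by (simp add: card_gt_0_iff carrier_not_empty)
  ultimately have "A \<one> = card characters"
    using card_by_fibres by simp
  then show ?thesis
    using A_pth_power A_other sum_characters[OF z] unfolding A_def by (cases "z \<in> pth_powers") auto
qed

end

locale character_transversal = exponent_p_characters +
  fixes T :: "('a \<Rightarrow> complex) set" and y :: "('a \<Rightarrow> complex) \<Rightarrow> 'a"
  assumes T_reps: "\<forall>\<tau>\<in>T. is_rep G \<tau> \<and> \<not> rep_trivial G \<tau> \<and> rep_trivial G (psi_rep G p \<tau>)"
    and T_complete: "\<forall>\<sigma>. is_rep G \<sigma> \<and> \<not> rep_trivial G \<sigma> \<and> rep_trivial G (psi_rep G p \<sigma>)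
                        \<longrightarrow> (\<exists>!\<tau>. \<tau> \<in> T \<and> rep_equiv G \<sigma> \<tau>)"
    and y_props: "\<forall>\<tau>\<in>T. y \<tau> \<in> carrier G \<and> \<tau> (y \<tau>) = omega p"
begin

lemma T_is_rep: "\<tau> \<in> T \<Longrightarrow> is_rep G \<tau>"
  using T_reps by blast

lemma T_at_y: "\<tau> \<in> T \<Longrightarrow> y \<tau> \<in> carrier G \<and> \<tau> (y \<tau>) = omega p"
  using y_props by blast

lemma T_root_unity: "\<tau> \<in> T \<Longrightarrow> x \<in> carrier G \<Longrightarrow> \<tau> x ^ p = 1"
  using T_reps is_rep_pow unfolding rep_trivial_def psi_rep_def by auto

definition char_power :: "('a \<Rightarrow> complex) \<times> nat \<Rightarrow> 'a \<Rightarrow> complex" where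
  "char_power = (\<lambda>(\<tau>, k) x. if x \<in> carrier G then \<tau> x ^ k else 1)"

lemma char_power_in_characters:
  assumes "\<tau> \<in> T"
  shows "char_power (\<tau>, k) \<in> characters"
proof -
  have "(\<tau> x ^ k) ^ p = 1" if "x \<in> carrier G" for x
    using T_root_unity[OF assms that] by (metis power_mult mult.commute power_one)
  then show ?thesis
    using T_is_rep[OF assms] unfolding characters_def char_power_def is_rep_def
    by (auto simp: power_mult_distrib)
qed

lemma char_power_nontrivial:
  assumes "\<tau> \<in> T" "k \<in> {1..<p}"
  shows "char_power (\<tau>, k) \<noteq> (\<lambda>_. 1)"
proof
  assume "char_power (\<tau>, k) = (\<lambda>_. 1)"
  then have "\<tau> (y \<tau>) ^ k = 1"
    using fun_cong[of _ _ "y \<tau>"] T_at_y[OF assms(1)] unfolding char_power_def by fastforce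
  then have "p dvd k"
    using T_at_y[OF assms(1)] omega_power_eq_1_iff two_le_p by simp
  then show False
    using assms(2) by (auto dest: dvd_imp_le)
qed

lemma inj_on_char_power: "inj_on char_power (T \<times> {1..<p})"
proof (rule inj_onI, clarify)
  fix \<tau> k \<sigma> m
  assume \<tau>: "\<tau> \<in> T" "k \<in> {1..<p}" and \<sigma>: "\<sigma> \<in> T" "m \<in> {1..<p}"
    and eq: "char_power (\<tau>, k) = char_power (\<sigma>, m)"
  have pow_eq: "\<tau> x ^ k = \<sigma> x ^ m" if "x \<in> carrier G" for x
    using fun_cong[OF eq, of x] that unfolding char_power_def by simp
  have "rep_kernel G \<tau> = rep_kernel G \<sigma>"
    unfolding rep_kernel_def
  proof (intro Collect_cong conj_cong refl)
    fix x assume x: "x \<in> carrier G"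
    have "\<tau> x = 1 \<longleftrightarrow> \<tau> x ^ k = 1"
      using prime_root_unity_power_eq_1_iff[OF prime_p T_root_unity[OF \<tau>(1) x]] \<tau>(2) by simp
    also have "\<dots> \<longleftrightarrow> \<sigma> x = 1"
      using prime_root_unity_power_eq_1_iff[OF prime_p T_root_unity[OF \<sigma>(1) x]] \<sigma>(2) pow_eq[OF x] by simp
    finally show "\<tau> x = 1 \<longleftrightarrow> \<sigma> x = 1" .
  qed
  then have "rep_equiv G \<tau> \<sigma>"
    unfolding rep_equiv_def .
  moreover have "rep_equiv G \<tau> \<tau>"
    unfolding rep_equiv_def by simp
  moreover have "\<exists>!\<tau>'. \<tau>' \<in> T \<and> rep_equiv G \<tau> \<tau>'"
    using T_complete T_reps \<tau>(1) by blast
  ultimately have "\<tau> = \<sigma>"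
    using \<tau>(1) \<sigma>(1) by blast
  moreover have "k mod p = m mod p"
    using pow_eq[of "y \<tau>"] T_at_y[OF \<tau>(1)] omega_power_eq_iff two_le_p \<open>\<tau> = \<sigma>\<close> by simp
  ultimately show "\<tau> = \<sigma> \<and> k = m"
    using \<tau>(2) \<sigma>(2) by simp
qed

lemma nontrivial_characters_subset_char_power:
  "characters - {\<lambda>_. 1} \<subseteq> char_power ` (T \<times> {1..<p})"
proof
  fix \<kappa> assume \<kappa>: "\<kappa> \<in> characters - {\<lambda>_. 1}"
  obtain w where w: "w \<in> carrier G" "\<kappa> w \<noteq> 1"
    using character_nontrivial_witness \<kappa> by blast
  have rep: "is_rep G \<kappa>"
    using characters_is_rep \<kappa> by simp
  have "\<not> rep_trivial G \<kappa>" "rep_trivial G (psi_rep G p \<kappa>)"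
    using w \<kappa> is_rep_pow[OF rep] unfolding rep_trivial_def psi_rep_def characters_def by auto
  then obtain \<tau> where \<tau>: "\<tau> \<in> T" "rep_equiv G \<kappa> \<tau>"
    using T_complete rep by blast
  have y: "y \<tau> \<in> carrier G" "\<tau> (y \<tau>) = omega p"
    using T_at_y[OF \<tau>(1)] by auto
  then have "\<kappa> (y \<tau>) ^ p = 1"
    using \<kappa> unfolding characters_def by auto
  then obtain k where k: "k < p" "\<kappa> (y \<tau>) = omega p ^ k"
    using root_unity_eq_omega_power two_le_p by (metis one_le_numeral order_trans)
  have \<kappa>_eq: "\<kappa> x = \<tau> x ^ k" if "x \<in> carrier G" for x
    using rep_eq_power_if_kernel_subset[OF T_is_rep[OF \<tau>(1)] rep _ _ y k(2) that T_root_unity[OF \<tau>(1) that]]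
      \<tau>(2) two_le_p unfolding rep_equiv_def by simp
  have "k \<noteq> 0"
    using \<kappa>_eq[OF w(1)] w(2) by (metis power_0)
  moreover have "\<kappa> = char_power (\<tau>, k)"
    using \<kappa>_eq \<kappa> unfolding char_power_def characters_def by (auto simp: fun_eq_iff)
  ultimately show "\<kappa> \<in> char_power ` (T \<times> {1..<p})"
    using \<tau>(1) k(1) by force
qed

lemma bij_betw_char_power: "bij_betw char_power (T \<times> {1..<p}) (characters - {\<lambda>_. 1})"
  unfolding bij_betw_def
  using inj_on_char_power nontrivial_characters_subset_char_power
    char_power_in_characters char_power_nontrivial by auto

lemma sum_characters_transversal:
  assumes z: "z \<in> carrier G"
  shows "(\<Sum>\<kappa>\<in>characters. \<kappa> z) = 1 + (\<Sum>\<tau>\<in>T. \<Sum>k=1..<p. \<tau> z ^ k)"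
proof -
  have "(\<Sum>\<kappa>\<in>characters. \<kappa> z) = 1 + (\<Sum>\<kappa>\<in>characters - {\<lambda>_. 1}. \<kappa> z)"
    using finite_characters const_one_in_characters by (simp add: sum.remove)
  also have "(\<Sum>\<kappa>\<in>characters - {\<lambda>_. 1}. \<kappa> z) = (\<Sum>\<tau>k\<in>T \<times> {1..<p}. char_power \<tau>k z)"
    using sum.reindex_bij_betw[OF bij_betw_char_power, of "\<lambda>\<kappa>. \<kappa> z"] by simp
  also have "\<dots> = (\<Sum>\<tau>\<in>T. \<Sum>k=1..<p. \<tau> z ^ k)"
    using z by (simp add: sum.cartesian_product char_power_def split_beta)
  finally show ?thesis .
qed

lemma card_pth_roots_transversal:
  assumes z: "z \<in> carrier G"
  shows "int (card {x \<in> carrier G. x [^] p = z}) = 1 + (\<Sum>\<tau>\<in>T. (if \<tau> z = 1 then int p else 0) - 1)"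
proof -
  have "complex_of_int (int (card {x \<in> carrier G. x [^] p = z})) = 1 + (\<Sum>\<tau>\<in>T. \<Sum>k=1..<p. \<tau> z ^ k)"
    using card_pth_roots[OF z] sum_characters_transversal[OF z] by simp
  also have "\<dots> = 1 + (\<Sum>\<tau>\<in>T. if \<tau> z = 1 then of_nat p - 1 else -1)"
    using sum_powers_root_unity T_root_unity z two_le_p by (intro arg_cong2[where f = "(+)"] sum.cong) auto
  also have "\<dots> = complex_of_int (1 + (\<Sum>\<tau>\<in>T. (if \<tau> z = 1 then int p else 0) - 1))"
    by (simp add: of_int_sum) (intro sum.cong refl, simp)
  finally show ?thesis
    by (simp only: of_int_eq_iff)
qed

end

theorem mainTheorem6:
  fixes G :: "('a, 'b) monoid_scheme" and p e :: nat
    and T :: "('a \<Rightarrow> complex) set" and y :: "('a \<Rightarrow> complex) \<Rightarrow> 'a"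
  assumes "prime p" and "e \<ge> 1"
    and "comm_group G" and "finite (carrier G)" and "card (carrier G) = p ^ e"
    and T_reps: "\<forall>\<tau>\<in>T. is_rep G \<tau> \<and> \<not> rep_trivial G \<tau> \<and> rep_trivial G (psi_rep G p \<tau>)"
    and T_complete: "\<forall>\<sigma>. is_rep G \<sigma> \<and> \<not> rep_trivial G \<sigma> \<and> rep_trivial G (psi_rep G p \<sigma>)
                        \<longrightarrow> (\<exists>!\<tau>. \<tau> \<in> T \<and> rep_equiv G \<sigma> \<tau>)"
    and y_def: "\<forall>\<tau>\<in>T. y \<tau> \<in> carrier G \<and> \<tau> (y \<tau>) = omega p"
  shows "psi_gr G p (b_one G) =
           gr_add (b_one G)
             (gr_sum (\<lambda>\<tau>. gr_mult G (gr_poly_eval G (h_poly p) (y \<tau>)) (b_rep G p \<tau>)) T)"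
proof
  interpret character_transversal G p T y
    using assms by (simp add: character_transversal_def character_transversal_axioms_def
        exponent_p_characters_def exponent_p_characters_axioms_def)
  fix z
  show "psi_gr G p (b_one G) z =
          gr_add (b_one G) (gr_sum (\<lambda>\<tau>. gr_mult G (gr_poly_eval G (h_poly p) (y \<tau>)) (b_rep G p \<tau>)) T) z"
  proof (cases "z \<in> carrier G")
    case False
    then show ?thesis
      unfolding psi_gr_def gr_add_def gr_sum_def gr_mult_def b_one_def by (auto intro!: sum.neutral)
  next
    case True
    have "psi_gr G p (b_one G) z = int (card {x \<in> carrier G. x [^]\<^bsub>G\<^esub> p = z})"
      unfolding psi_gr_def b_one_def using finite_carrier by (simp add: sum.If_cases Int_def)
    also have "\<dots> = 1 + (\<Sum>\<tau>\<in>T. (if \<tau> z = 1 then int p else 0) - 1)"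
      by (rule card_pth_roots_transversal[OF True])
    also have "\<dots> = gr_add (b_one G) (gr_sum (\<lambda>\<tau>. gr_mult G (gr_poly_eval G (h_poly p) (y \<tau>)) (b_rep G p \<tau>)) T) z"
      unfolding gr_add_def gr_sum_def b_one_def using True
      by (simp add: gr_mult_h_poly_b_rep finite_carrier two_le_p T_is_rep T_at_y T_root_unity cong: sum.cong)
    finally show ?thesis .
  qed
qed

end
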